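(* For every $\varepsilon>0$ there exists a simple bipartite cubic graph $G$ such that every traveling salesman tour of $G$ has length at least $(1.2-\varepsilon)\,|V(G)|$.
   Context: A traveling salesman tour (TSP tour) of a graph $G$ is a closed walk in $G$ that visits every vertex of $G$; its length is the number of edges traversed, counted with multiplicity. *)

theory Defs
  imports Complex_Main
begin

definition simple_graph :: "nat set \<Rightarrow> (nat \<Rightarrow> nat \<Rightarrow> bool) \<Rightarrow> bool" where
  "simple_graph V E \<longleftrightarrow> finite V \<and>
     (\<forall>x y. E x y \<longrightarrow> x \<in> V \<and> y \<in> V) \<and>
     (\<forall>x y. E x y \<longrightarrow> E y x) \<and> (\<forall>x. \<not> E x x)"

definition cubic :: "nat set \<Rightarrow> (nat \<Rightarrow> nat \<Rightarrow> bool) \<Rightarrow> bool" where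
  "cubic V E \<longleftrightarrow> (\<forall>x\<in>V. card {y. E x y} = 3)"

definition bipartite :: "nat set \<Rightarrow> (nat \<Rightarrow> nat \<Rightarrow> bool) \<Rightarrow> bool" where
  "bipartite V E \<longleftrightarrow> (\<exists>A B. A \<union> B = V \<and> A \<inter> B = {} \<and>
     (\<forall>x y. E x y \<longrightarrow> (x \<in> A \<and> y \<in> B) \<or> (x \<in> B \<and> y \<in> A)))"

definition is_walk :: "nat set \<Rightarrow> (nat \<Rightarrow> nat \<Rightarrow> bool) \<Rightarrow> nat list \<Rightarrow> bool" where
  "is_walk V E w \<longleftrightarrow> w \<noteq> [] \<and> set w \<subseteq> V \<and>
     (\<forall>i. Suc i < length w \<longrightarrow> E (w ! i) (w ! Suc i))"

definition connected_graph :: "nat set \<Rightarrow> (nat \<Rightarrow> nat \<Rightarrow> bool) \<Rightarrow> bool" where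
  "connected_graph V E \<longleftrightarrow> V \<noteq> {} \<and>
     (\<forall>x\<in>V. \<forall>y\<in>V. \<exists>w. is_walk V E w \<and> hd w = x \<and> last w = y)"

definition tsp_tour :: "nat set \<Rightarrow> (nat \<Rightarrow> nat \<Rightarrow> bool) \<Rightarrow> nat list \<Rightarrow> bool" where
  "tsp_tour V E w \<longleftrightarrow> is_walk V E w \<and> hd w = last w \<and> set w = V"

definition walk_length :: "nat list \<Rightarrow> nat" where
  "walk_length w = length w - 1"

end

theory Submission
  imports Defs
begin

(* A closed walk without loops visits each vertex x half as often as it traverses the edges at x,
   and it crosses every edge cut an even, positive number of times.  The graphs are two copies of
   a gadget G_k joined by two edges, where G_0 is K_{3,3} minus an edge and G_(k+1) consists of
   four new hub vertices and two copies of G_k.  The degree equations at the four hubs, combined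
   with six cuts around them, show that a tour makes at least b_(k+1) = 2 b_k + 6 visits in
   G_(k+1), and one more if it uses only one of the two edges leaving G_(k+1).  Since
   5 b_k + 6 = 6 |G_k|, every tour has at least 2 b_k = 1.2 |V| - 2.4 steps. *)

section \<open>Visits, traversals and crossings of closed walks\<close>

(* A closed walk is a list w with hd w = last w; its steps are indexed by i < length w - 1, and
   every count below is taken over steps, so the repeated endpoint is counted once. *)

definition visits :: "'a list \<Rightarrow> 'a set \<Rightarrow> nat" where
  "visits w T = (\<Sum>i < length w - 1. of_bool (w ! i \<in> T))"

definition traversals :: "'a list \<Rightarrow> 'a \<Rightarrow> 'a \<Rightarrow> nat" where
  "traversals w x y = (\<Sum>i < length w - 1. of_bool ({w ! i, w ! Suc i} = {x, y}))"

definition crossings :: "'a list \<Rightarrow> 'a set \<Rightarrow> nat" where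
  "crossings w T = (\<Sum>i < length w - 1. of_bool ((w ! i \<in> T) \<noteq> (w ! Suc i \<in> T)))"

lemma traversals_commute: "traversals w x y = traversals w y x"
  unfolding traversals_def by (simp only: insert_commute[of x y])

lemma sum_closed_walk_shift:
  fixes f :: "'a \<Rightarrow> 'b :: cancel_comm_monoid_add"
  assumes "w \<noteq> []" "hd w = last w"
  shows "(\<Sum>i < length w - 1. f (w ! Suc i)) = (\<Sum>i < length w - 1. f (w ! i))"
proof -
  let ?L = "length w - 1"
  have "f (w ! 0) + (\<Sum>i < ?L. f (w ! Suc i)) = (\<Sum>i < Suc ?L. f (w ! i))"
    by (rule sum.lessThan_Suc_shift[symmetric])
  also have "\<dots> = f (w ! ?L) + (\<Sum>i < ?L. f (w ! i))"
    by (simp add: add.commute)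
  also have "w ! ?L = w ! 0"
    using assms by (simp add: hd_conv_nth last_conv_nth)
  finally show ?thesis by simp
qed

lemma even_crossings:
  assumes "w \<noteq> []" "hd w = last w"
  shows "even (crossings w T)"
proof -
  let ?L = "length w - 1"
  let ?out = "\<Sum>i < ?L. of_bool (w ! i \<in> T \<and> w ! Suc i \<notin> T) :: nat"
  let ?in = "\<Sum>i < ?L. of_bool (w ! i \<notin> T \<and> w ! Suc i \<in> T) :: nat"
  let ?stay = "\<Sum>i < ?L. of_bool (w ! i \<in> T \<and> w ! Suc i \<in> T) :: nat"
  have "(\<Sum>i < ?L. of_bool (w ! i \<in> T) :: nat) = ?stay + ?out"
    unfolding sum.distrib[symmetric] by (rule sum.cong) auto
  moreover have "(\<Sum>i < ?L. of_bool (w ! Suc i \<in> T) :: nat) = ?stay + ?in"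
    unfolding sum.distrib[symmetric] by (rule sum.cong) auto
  moreover have "(\<Sum>i < ?L. of_bool (w ! Suc i \<in> T) :: nat) = (\<Sum>i < ?L. of_bool (w ! i \<in> T))"
    using sum_closed_walk_shift[OF assms, of "\<lambda>x. of_bool (x \<in> T) :: nat"] by simp
  moreover have "crossings w T = ?out + ?in"
    unfolding crossings_def sum.distrib[symmetric] by (rule sum.cong) auto
  ultimately have "crossings w T = 2 * ?out" by simp
  then show ?thesis by simp
qed

lemma crossings_pos:
  assumes "x \<in> set w" "y \<in> set w" "x \<in> T" "y \<notin> T"
  shows "0 < crossings w T"
proof (rule ccontr)
  let ?L = "length w - 1"
  assume "\<not> ?thesis"
  then have step: "w ! Suc i \<in> T \<longleftrightarrow> w ! i \<in> T" if "i < ?L" for i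
    using that unfolding crossings_def by auto
  have same: "w ! i \<in> T \<longleftrightarrow> w ! 0 \<in> T" if "i < length w" for i
    using that by (induction i) (auto simp: step)
  obtain i j where "i < length w" "w ! i = x" "j < length w" "w ! j = y"
    using assms(1,2) by (auto simp: in_set_conv_nth)
  then show False
    using same[of i] same[of j] assms(3,4) by simp
qed

lemma crossings_singleton:
  assumes "w \<noteq> []" "hd w = last w" "\<forall>i < length w - 1. w ! i \<noteq> w ! Suc i"
  shows "crossings w {x} = 2 * visits w {x}"
proof -
  let ?L = "length w - 1"
  have "crossings w {x} = (\<Sum>i < ?L. of_bool (w ! i = x)) + (\<Sum>i < ?L. of_bool (w ! Suc i = x) :: nat)"
    unfolding crossings_def sum.distrib[symmetric] using assms(3) by (intro sum.cong) auto
  also have "(\<Sum>i < ?L. of_bool (w ! Suc i = x) :: nat) = (\<Sum>i < ?L. of_bool (w ! i = x))"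
    using sum_closed_walk_shift[OF assms(1,2), of "\<lambda>y. of_bool (y = x) :: nat"] by simp
  finally show ?thesis unfolding visits_def by simp
qed

lemma of_bool_crosses_eq_sum:
  assumes "finite P" "\<forall>(x, y) \<in> P. x \<in> T \<and> y \<notin> T"
    and "a \<in> T \<Longrightarrow> b \<notin> T \<Longrightarrow> (a, b) \<in> P" "b \<in> T \<Longrightarrow> a \<notin> T \<Longrightarrow> (b, a) \<in> P"
  shows "of_bool ((a \<in> T) \<noteq> (b \<in> T)) = (\<Sum>(x, y) \<in> P. of_bool ({a, b} = {x, y}) :: nat)"
proof -
  have "(\<Sum>(x, y) \<in> P. of_bool ({a, b} = {x, y}) :: nat) = card (P \<inter> {(x, y). {a, b} = {x, y}})"
    using assms(1) by (simp add: case_prod_unfold)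
  also have "P \<inter> {(x, y). {a, b} = {x, y}} =
      (if a \<in> T \<and> b \<notin> T then {(a, b)} else if b \<in> T \<and> a \<notin> T then {(b, a)} else {})"
    using assms(2-4) by (auto simp: doubleton_eq_iff)
  finally show ?thesis by auto
qed

lemma crossings_eq_sum_traversals:
  assumes steps: "\<forall>i < length w - 1. E (w ! i) (w ! Suc i)" and "symp E"
    and "finite P" and P: "\<forall>(a, b) \<in> P. a \<in> T \<and> b \<notin> T"
    and leaving: "\<And>a b. E a b \<Longrightarrow> a \<in> T \<Longrightarrow> b \<notin> T \<Longrightarrow> (a, b) \<in> P"
  shows "crossings w T = (\<Sum>(a, b) \<in> P. traversals w a b)"
proof -
  let ?L = "length w - 1"
  have "crossings w T = (\<Sum>i < ?L. \<Sum>(a, b) \<in> P. of_bool ({w ! i, w ! Suc i} = {a, b}))"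
    unfolding crossings_def
  proof (rule sum.cong)
    fix i assume "i \<in> {..<?L}"
    then have edges: "E (w ! i) (w ! Suc i)" "E (w ! Suc i) (w ! i)"
      using steps \<open>symp E\<close> by (auto dest: sympD)
    show "of_bool ((w ! i \<in> T) \<noteq> (w ! Suc i \<in> T)) =
        (\<Sum>(a, b) \<in> P. of_bool ({w ! i, w ! Suc i} = {a, b}) :: nat)"
      by (rule of_bool_crosses_eq_sum[OF \<open>finite P\<close> P]) (use edges in \<open>auto intro: leaving\<close>)
  qed simp
  also have "\<dots> = (\<Sum>(a, b) \<in> P. traversals w a b)"
    unfolding traversals_def by (subst sum.swap) (simp add: case_prod_unfold)
  finally show ?thesis .
qed

lemma visits_Un:
  "A \<inter> B = {} \<Longrightarrow> visits w (A \<union> B) = visits w A + visits w B"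
  unfolding visits_def sum.distrib[symmetric] by (rule sum.cong) auto

lemma visits_eq_sum_singletons:
  "finite S \<Longrightarrow> visits w S = (\<Sum>x \<in> S. visits w {x})"
  unfolding visits_def by (subst sum.swap) (simp add: of_bool_def)

lemma visits_singleton_pos:
  assumes "w \<noteq> []" "hd w = last w" "2 \<le> length w" "x \<in> set w"
  shows "0 < visits w {x}"
proof -
  let ?L = "length w - 1"
  obtain j where j: "j < length w" "w ! j = x"
    using assms(4) by (auto simp: in_set_conv_nth)
  obtain i where i: "i < ?L" "w ! i = x"
  proof (cases "j < ?L")
    case False
    then have "j = ?L" using j(1) by simp
    then have "w ! 0 = x"
      using assms(1,2) j(2) by (simp add: hd_conv_nth last_conv_nth)
    then show ?thesis using that[of 0] assms(3) by simp
  qed (use j that in blast)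
  then show ?thesis
    unfolding visits_def by (intro sum_pos2[of _ i]) auto
qed

lemma visits_of_superset:
  "set w \<subseteq> V \<Longrightarrow> visits w V = length w - 1"
  unfolding visits_def by (auto intro: sum.neutral simp: subset_iff)

section \<open>The gadgets\<close>

(* G_0 is K_{3,3} minus the edge {c, c + 1} on the block c, ..., c + 5, the sides being the offsets
   of equal parity.  G_(k+1) has the hubs c, ..., c + 3, and copies of G_k at c + 4 and
   c + 4 + gadget_size k joined to the hubs by gadget_link.  In every G_k the terminals c and c + 1
   have degree 2 and all other vertices degree 3. *)

fun gadget_size :: "nat \<Rightarrow> nat" where
  "gadget_size 0 = 6"
| "gadget_size (Suc k) = 2 * gadget_size k + 4"

fun gadget_visit_bound :: "nat \<Rightarrow> nat" where
  "gadget_visit_bound 0 = 6"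
| "gadget_visit_bound (Suc k) = 2 * gadget_visit_bound k + 6"

definition gadget_link :: "nat \<Rightarrow> nat \<Rightarrow> nat \<Rightarrow> nat \<Rightarrow> bool" where
  "gadget_link n c x y \<longleftrightarrow>
     (x = c \<and> y = c + 1) \<or> (x = c + 1 \<and> y = c + 2) \<or> (x = c \<and> y = c + 3) \<or>
     (x = c + 3 \<and> y = c + 4) \<or> (x = c + 3 \<and> y = c + 4 + n) \<or>
     (x = c + 2 \<and> y = c + 5) \<or> (x = c + 2 \<and> y = c + 5 + n)"

fun gadget_edge :: "nat \<Rightarrow> nat \<Rightarrow> nat \<Rightarrow> nat \<Rightarrow> bool" where
  "gadget_edge 0 c x y \<longleftrightarrow>
     x \<in> {c..<c + 6} \<and> y \<in> {c..<c + 6} \<and> odd (x + y) \<and> x + y \<noteq> 2 * c + 1"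
| "gadget_edge (Suc k) c x y \<longleftrightarrow>
     gadget_link (gadget_size k) c x y \<or> gadget_link (gadget_size k) c y x \<or>
     gadget_edge k (c + 4) x y \<or> gadget_edge k (c + 4 + gadget_size k) x y"

lemma gadget_size_ge_6: "6 \<le> gadget_size k"
  by (induction k) auto

lemma even_gadget_size: "even (gadget_size k)"
  by (induction k) auto

lemma gadget_size_ge: "k \<le> gadget_size k"
  by (induction k) auto

lemma gadget_visit_bound_eq: "5 * gadget_visit_bound k + 6 = 6 * gadget_size k"
  by (induction k) auto

lemma gadget_edge_range:
  "gadget_edge k c x y \<Longrightarrow> x \<in> {c..<c + gadget_size k} \<and> y \<in> {c..<c + gadget_size k}"
proof (induction k arbitrary: c)
  case (Suc k)
  then show ?case
    using gadget_size_ge_6[of k] by (auto simp: gadget_link_def dest!: Suc.IH)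
qed auto

lemma gadget_edge_commute: "gadget_edge k c x y \<longleftrightarrow> gadget_edge k c y x"
  by (induction k arbitrary: c) (auto simp: add.commute)

lemma gadget_edge_odd: "gadget_edge k c x y \<Longrightarrow> odd (x + y)"
proof (induction k arbitrary: c)
  case (Suc k)
  then show ?case
    using even_gadget_size[of k] by (auto simp: gadget_link_def dest!: Suc.IH)
qed auto

definition embedded_gadget :: "(nat \<Rightarrow> nat \<Rightarrow> bool) \<Rightarrow> nat \<Rightarrow> nat \<Rightarrow> nat \<Rightarrow> nat \<Rightarrow> bool" where
  "embedded_gadget E k c u v \<longleftrightarrow>
     u \<notin> {c..<c + gadget_size k} \<and> v \<notin> {c..<c + gadget_size k} \<and>
     (\<forall>x \<in> {c..<c + gadget_size k}. \<forall>y.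
        E x y \<longleftrightarrow> gadget_edge k c x y \<or> (x = c \<and> y = u) \<or> (x = c + 1 \<and> y = v))"

lemma embedded_gadget_boundary:
  assumes "embedded_gadget E k c u v" "E x y"
    and "x \<in> {c..<c + gadget_size k}" "y \<notin> {c..<c + gadget_size k}"
  shows "(x, y) = (c, u) \<or> (x, y) = (c + 1, v)"
  using assms gadget_edge_range[of k c x y] unfolding embedded_gadget_def by blast

lemma embedded_gadget_0:
  assumes "embedded_gadget E 0 c u v"
  shows "E c y \<longleftrightarrow> y = u \<or> y = c + 3 \<or> y = c + 5"
    and "E (c + 1) y \<longleftrightarrow> y = v \<or> y = c + 2 \<or> y = c + 4"
    and "E (c + 2) y \<longleftrightarrow> y = c + 1 \<or> y = c + 3 \<or> y = c + 5"
    and "E (c + 3) y \<longleftrightarrow> y = c \<or> y = c + 2 \<or> y = c + 4"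
    and "E (c + 4) y \<longleftrightarrow> y = c + 1 \<or> y = c + 3 \<or> y = c + 5"
    and "E (c + 5) y \<longleftrightarrow> y = c \<or> y = c + 2 \<or> y = c + 4"
proof -
  have block: "{c..<c + 6} = {c, c + 1, c + 2, c + 3, c + 4, c + 5}" by auto
  have edge: "E x y \<longleftrightarrow> gadget_edge 0 c x y \<or> (x = c \<and> y = u) \<or> (x = c + 1 \<and> y = v)"
    if "x \<in> {c..<c + 6}" for x y
    using assms that unfolding embedded_gadget_def by simp
  have "u \<notin> {c..<c + 6}" "v \<notin> {c..<c + 6}"
    using assms unfolding embedded_gadget_def by simp_all
  then show "E c y \<longleftrightarrow> y = u \<or> y = c + 3 \<or> y = c + 5"
    and "E (c + 1) y \<longleftrightarrow> y = v \<or> y = c + 2 \<or> y = c + 4"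
    and "E (c + 2) y \<longleftrightarrow> y = c + 1 \<or> y = c + 3 \<or> y = c + 5"
    and "E (c + 3) y \<longleftrightarrow> y = c \<or> y = c + 2 \<or> y = c + 4"
    and "E (c + 4) y \<longleftrightarrow> y = c + 1 \<or> y = c + 3 \<or> y = c + 5"
    and "E (c + 5) y \<longleftrightarrow> y = c \<or> y = c + 2 \<or> y = c + 4"
    by (auto simp: edge block)
qed

lemma gadget_edge_Suc_hub:
  "x < c + 4 \<Longrightarrow>
   gadget_edge (Suc k) c x y \<longleftrightarrow> gadget_link (gadget_size k) c x y \<or> gadget_link (gadget_size k) c y x"
  using gadget_edge_range[of k "c + 4" x y] gadget_edge_range[of k "c + 4 + gadget_size k" x y] by auto

lemma gadget_edge_Suc_left:
  "x \<in> {c + 4..<c + 4 + gadget_size k} \<Longrightarrow>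
   gadget_edge (Suc k) c x y \<longleftrightarrow> gadget_edge k (c + 4) x y \<or> (x = c + 4 \<and> y = c + 3) \<or> (x = c + 5 \<and> y = c + 2)"
  using gadget_edge_range[of k "c + 4 + gadget_size k" x y] by (auto simp: gadget_link_def)

lemma gadget_edge_Suc_right:
  "x \<in> {c + 4 + gadget_size k..<c + 4 + 2 * gadget_size k} \<Longrightarrow>
   gadget_edge (Suc k) c x y \<longleftrightarrow>
     gadget_edge k (c + 4 + gadget_size k) x y \<or>
     (x = c + 4 + gadget_size k \<and> y = c + 3) \<or> (x = c + 5 + gadget_size k \<and> y = c + 2)"
  using gadget_edge_range[of k "c + 4" x y] gadget_size_ge_6[of k] by (auto simp: gadget_link_def)

context
  fixes E k c u v
  assumes gadget: "embedded_gadget E (Suc k) c u v"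
begin

private lemma edge_iff:
  "x \<in> {c..<c + 2 * gadget_size k + 4} \<Longrightarrow> E x y \<longleftrightarrow> gadget_edge (Suc k) c x y \<or> (x = c \<and> y = u) \<or> (x = c + 1 \<and> y = v)"
  using gadget unfolding embedded_gadget_def by (simp add: add.assoc)

lemma embedded_gadget_Suc_hubs:
  shows "E c y \<longleftrightarrow> y = u \<or> y = c + 1 \<or> y = c + 3"
    and "E (c + 1) y \<longleftrightarrow> y = v \<or> y = c \<or> y = c + 2"
    and "E (c + 2) y \<longleftrightarrow> y = c + 1 \<or> y = c + 5 \<or> y = c + 5 + gadget_size k"
    and "E (c + 3) y \<longleftrightarrow> y = c \<or> y = c + 4 \<or> y = c + 4 + gadget_size k"
  by (auto simp: edge_iff gadget_edge_Suc_hub gadget_link_def simp del: gadget_edge.simps)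

lemma embedded_gadget_Suc_copies:
  shows "embedded_gadget E k (c + 4) (c + 3) (c + 2)"
    and "embedded_gadget E k (c + 4 + gadget_size k) (c + 3) (c + 2)"
  unfolding embedded_gadget_def
  by (auto simp: edge_iff gadget_edge_Suc_left gadget_edge_Suc_right simp del: gadget_edge.simps)

end

lemma card_Collect_eq_3:
  assumes "\<And>y. P y \<longleftrightarrow> y = a \<or> y = b \<or> y = d" "distinct [a, b, d]"
  shows "card {y. P y} = 3"
proof -
  have "{y. P y} = {a, b, d}" using assms(1) by auto
  then show ?thesis using assms(2) by simp
qed

lemma embedded_gadget_degree:
  "embedded_gadget E k c u v \<Longrightarrow> x \<in> {c..<c + gadget_size k} \<Longrightarrow> card {y. E x y} = 3"
proof (induction k arbitrary: c u v)
  case 0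
  note nbrs = embedded_gadget_0[OF 0(1)]
  have uv: "u \<notin> {c..<c + 6}" "v \<notin> {c..<c + 6}" using 0(1) by (simp_all add: embedded_gadget_def)
  have "card {y. E c y} = 3" by (rule card_Collect_eq_3[OF nbrs(1)]) (use uv in auto)
  moreover have "card {y. E (c + 1) y} = 3" by (rule card_Collect_eq_3[OF nbrs(2)]) (use uv in auto)
  moreover have "card {y. E (c + 2) y} = 3" by (rule card_Collect_eq_3[OF nbrs(3)]) auto
  moreover have "card {y. E (c + 3) y} = 3" by (rule card_Collect_eq_3[OF nbrs(4)]) auto
  moreover have "card {y. E (c + 4) y} = 3" by (rule card_Collect_eq_3[OF nbrs(5)]) auto
  moreover have "card {y. E (c + 5) y} = 3" by (rule card_Collect_eq_3[OF nbrs(6)]) auto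
  moreover have "x = c \<or> x = c + 1 \<or> x = c + 2 \<or> x = c + 3 \<or> x = c + 4 \<or> x = c + 5"
    using 0(2) by auto
  ultimately show ?case by auto
next
  case (Suc k)
  define n where "n = gadget_size k"
  note nbrs = embedded_gadget_Suc_hubs[OF Suc.prems(1), folded n_def]
  note copies = embedded_gadget_Suc_copies[OF Suc.prems(1), folded n_def]
  have uv: "u \<notin> {c..<c + 2 * n + 4}" "v \<notin> {c..<c + 2 * n + 4}" "6 \<le> n"
    using Suc.prems(1) gadget_size_ge_6[of k] by (simp_all add: embedded_gadget_def n_def add.assoc)
  have "card {y. E c y} = 3" by (rule card_Collect_eq_3[OF nbrs(1)]) (use uv in auto)
  moreover have "card {y. E (c + 1) y} = 3" by (rule card_Collect_eq_3[OF nbrs(2)]) (use uv in auto)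
  moreover have "card {y. E (c + 2) y} = 3" by (rule card_Collect_eq_3[OF nbrs(3)]) (use uv in auto)
  moreover have "card {y. E (c + 3) y} = 3" by (rule card_Collect_eq_3[OF nbrs(4)]) (use uv in auto)
  moreover have "x \<in> {c, c + 1, c + 2, c + 3} \<or> x \<in> {c + 4..<c + 4 + n} \<or> x \<in> {c + 4 + n..<c + 4 + n + n}"
    using Suc.prems(2) by (auto simp: n_def)
  ultimately show ?case
    using Suc.IH[OF copies(1)] Suc.IH[OF copies(2)] by (auto simp: n_def)
qed

lemma embedded_gadget_reachable:
  "embedded_gadget E k c u v \<Longrightarrow> x \<in> {c..<c + gadget_size k} \<Longrightarrow> E\<^sup>*\<^sup>* c x"
proof (induction k arbitrary: c u v x)
  case 0
  note nbrs = embedded_gadget_0[OF 0(1)]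
  have "E c (c + 3)" "E (c + 3) (c + 2)" "E (c + 2) (c + 1)" "E (c + 3) (c + 4)" "E (c + 4) (c + 5)"
    using nbrs by blast+
  then have "E\<^sup>*\<^sup>* c (c + 3)" "E\<^sup>*\<^sup>* c (c + 2)" "E\<^sup>*\<^sup>* c (c + 1)" "E\<^sup>*\<^sup>* c (c + 4)" "E\<^sup>*\<^sup>* c (c + 5)"
    by (meson rtranclp.rtrancl_into_rtrancl r_into_rtranclp)+
  moreover have "x = c \<or> x = c + 1 \<or> x = c + 2 \<or> x = c + 3 \<or> x = c + 4 \<or> x = c + 5"
    using 0(2) by auto
  ultimately show ?case by auto
next
  case (Suc k)
  define n where "n = gadget_size k"
  note nbrs = embedded_gadget_Suc_hubs[OF Suc.prems(1), folded n_def]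
  note copies = embedded_gadget_Suc_copies[OF Suc.prems(1), folded n_def]
  have "E c (c + 1)" "E (c + 1) (c + 2)" "E c (c + 3)" "E (c + 3) (c + 4)" "E (c + 3) (c + 4 + n)"
    using nbrs by blast+
  then have hubs: "E\<^sup>*\<^sup>* c (c + 1)" "E\<^sup>*\<^sup>* c (c + 2)" "E\<^sup>*\<^sup>* c (c + 3)"
    and roots: "E\<^sup>*\<^sup>* c (c + 4)" "E\<^sup>*\<^sup>* c (c + 4 + n)"
    by (meson rtranclp.rtrancl_into_rtrancl r_into_rtranclp)+
  have "x \<in> {c, c + 1, c + 2, c + 3} \<or> x \<in> {c + 4..<c + 4 + n} \<or> x \<in> {c + 4 + n..<c + 4 + n + n}"
    using Suc.prems(2) by (auto simp: n_def)
  then show ?case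
    using hubs rtranclp_trans[OF roots(1) Suc.IH[OF copies(1)]] rtranclp_trans[OF roots(2) Suc.IH[OF copies(2)]]
    by (auto simp: n_def)
qed

section \<open>Tours through a gadget\<close>

(* The arithmetic at the hubs t, s, p, q = c, c + 1, c + 2, c + 3 of G_(k+1): vt, ... are their
   visits, A and B the traversals of the external edges at t and s, ts, sp, tq those of the hub
   edges, q1, p1 and q2, p2 those of the edges from q and p into the two copies.  The cut
   hypotheses come from the two copies, from the block without t and s, without s, without t, and
   from the whole block. *)

lemma hub_inequality_balanced:
  fixes A B ts sp tq q1 q2 p1 p2 vt vs vp vq :: nat
  assumes "2 * vt = A + ts + tq" "2 * vs = B + ts + sp" "2 * vp = sp + p1 + p2" "2 * vq = tq + q1 + q2"
    and "0 < vt" "0 < vs"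
    and "2 \<le> q1 + p1" "2 \<le> q2 + p2" "2 \<le> sp + tq" "2 \<le> A + ts + sp" "2 \<le> B + ts + tq" "2 \<le> A + B"
    and "q1 \<noteq> 0" "p1 \<noteq> 0" "q2 \<noteq> 0" "p2 \<noteq> 0"
  shows "6 \<le> vt + vs + vp + vq"
proof (rule ccontr)
  assume small: "\<not> ?thesis"
  then have tight: "ts = 0" "sp + tq = 2" "p1 = 1" "p2 = 1"
    using assms by linarith+
  then have "2 * vp = sp + 2"
    using assms(3) by simp
  then have "sp = 0 \<or> sp = 2"
    using tight by presburger
  then show False
    using assms tight small by (elim disjE) linarith+
qed

lemma hub_inequality_unbalanced:
  fixes B ts sp tq q1 q2 p1 p2 vt vs vp vq :: nat
  assumes "2 * vt = ts + tq" "2 * vs = B + ts + sp" "2 * vp = sp + p1 + p2" "2 * vq = tq + q1 + q2"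
    and "0 < vt"
    and "2 \<le> q1 + p1" "2 \<le> q2 + p2" "2 \<le> sp + tq" "2 \<le> ts + sp" "2 \<le> B"
  shows "7 \<le> vt + vs + vp + vq + of_bool (q1 = 0 \<or> p1 = 0) + of_bool (q2 = 0 \<or> p2 = 0)"
proof -
  have six: "6 \<le> vt + vs + vp + vq" using assms by linarith
  show ?thesis
  proof (cases "q1 = 0 \<or> p1 = 0 \<or> q2 = 0 \<or> p2 = 0")
    case True
    then show ?thesis using six by auto
  next
    case False
    have "7 \<le> vt + vs + vp + vq"
    proof (rule ccontr)
      assume "\<not> ?thesis"
      then have "sp = 1" "p1 = 1" "p2 = 1" using assms False by linarith+
      then show False using assms(3) by presburger
    qed
    then show ?thesis by simp
  qed
qed

lemma hub_inequality:
  fixes A B ts sp tq q1 q2 p1 p2 vt vs vp vq :: nat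
  assumes deg: "2 * vt = A + ts + tq" "2 * vs = B + ts + sp" "2 * vp = sp + p1 + p2" "2 * vq = tq + q1 + q2"
    and pos: "0 < vt" "0 < vs"
    and cut: "2 \<le> q1 + p1" "2 \<le> q2 + p2" "2 \<le> sp + tq" "2 \<le> A + ts + sp" "2 \<le> B + ts + tq" "2 \<le> A + B"
  shows "6 + of_bool (A = 0 \<or> B = 0) \<le> vt + vs + vp + vq + of_bool (q1 = 0 \<or> p1 = 0) + of_bool (q2 = 0 \<or> p2 = 0)"
proof -
  consider "A = 0" | "B = 0" | "A \<noteq> 0" "B \<noteq> 0" "q1 = 0 \<or> p1 = 0 \<or> q2 = 0 \<or> p2 = 0"
    | "A \<noteq> 0" "B \<noteq> 0" "q1 \<noteq> 0" "p1 \<noteq> 0" "q2 \<noteq> 0" "p2 \<noteq> 0"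
    by blast
  then show ?thesis
  proof cases
    case 1
    then show ?thesis
      using hub_inequality_unbalanced[of vt ts tq vs B sp vp p1 p2 vq q1 q2] assms by simp
  next
    case 2
    then show ?thesis
      using hub_inequality_unbalanced[of vs ts sp vt A tq vq q1 q2 vp p1 p2] assms by (simp add: disj_commute)
  next
    case 3
    moreover have "5 \<le> vt + vs + vp + vq" using deg cut by linarith
    ultimately show ?thesis by auto
  next
    case 4
    then show ?thesis using hub_inequality_balanced[OF assms] by simp
  qed
qed

locale graph_tour =
  fixes V :: "nat set" and E :: "nat \<Rightarrow> nat \<Rightarrow> bool" and w :: "nat list"
  assumes graph: "simple_graph V E" and tour: "tsp_tour V E w" and two_vertices: "2 \<le> card V"
begin

lemma symp_edge: "symp E"
  using graph unfolding simple_graph_def by (blast intro: sympI)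

lemma edge_sym: "E x y \<Longrightarrow> E y x"
  using symp_edge by (rule sympD)

lemma edge_vertices: "E x y \<Longrightarrow> x \<in> V \<and> y \<in> V"
  using graph unfolding simple_graph_def by blast

lemma nonempty: "w \<noteq> []" and closed: "hd w = last w" and set_tour: "set w = V"
  and steps: "\<forall>i < length w - 1. E (w ! i) (w ! Suc i)"
  using tour unfolding tsp_tour_def is_walk_def by auto

lemma length_ge_2: "2 \<le> length w"
  using two_vertices card_length[of w] by (simp add: set_tour)

lemma visits_vertex_pos: "x \<in> V \<Longrightarrow> 0 < visits w {x}"
  using visits_singleton_pos[OF nonempty closed length_ge_2] by (simp add: set_tour)

lemma card_le_visits: "S \<subseteq> V \<Longrightarrow> card S \<le> visits w S"
proof -
  assume "S \<subseteq> V"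
  moreover have "finite V" using graph unfolding simple_graph_def by blast
  ultimately have "finite S" by (rule finite_subset)
  have "card S = (\<Sum>x \<in> S. 1)" by simp
  also have "\<dots> \<le> (\<Sum>x \<in> S. visits w {x})"
    using \<open>S \<subseteq> V\<close> visits_vertex_pos by (intro sum_mono) (auto simp: Suc_le_eq)
  also have "\<dots> = visits w S"
    using visits_eq_sum_singletons[OF \<open>finite S\<close>] by simp
  finally show ?thesis .
qed

lemma cut_traversals_ge_2:
  assumes "finite P" "\<forall>(a, b) \<in> P. a \<in> T \<and> b \<notin> T"
    and "\<And>a b. E a b \<Longrightarrow> a \<in> T \<Longrightarrow> b \<notin> T \<Longrightarrow> (a, b) \<in> P"
    and "(a, b) \<in> P" "E a b"
  shows "2 \<le> (\<Sum>(a, b) \<in> P. traversals w a b)"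
proof -
  have "crossings w T = (\<Sum>(a, b) \<in> P. traversals w a b)"
    by (rule crossings_eq_sum_traversals[OF steps symp_edge assms(1-3)])
  moreover have "a \<in> set w" "b \<in> set w" "a \<in> T" "b \<notin> T"
    using assms(2,4,5) edge_vertices by (auto simp: set_tour)
  then have "0 < crossings w T" by (rule crossings_pos)
  moreover have "even (crossings w T)" by (rule even_crossings[OF nonempty closed])
  ultimately show ?thesis by (auto elim!: evenE)
qed

lemma cut2_traversals_ge_2:
  assumes "E a1 b1" "a1 \<in> T" "b1 \<notin> T" "a2 \<in> T" "b2 \<notin> T" "(a1, b1) \<noteq> (a2, b2)"
    and "\<And>a b. E a b \<Longrightarrow> a \<in> T \<Longrightarrow> b \<notin> T \<Longrightarrow> (a, b) = (a1, b1) \<or> (a, b) = (a2, b2)"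
  shows "2 \<le> traversals w a1 b1 + traversals w a2 b2"
  using cut_traversals_ge_2[of "{(a1, b1), (a2, b2)}" T a1 b1] assms by auto

lemma cut3_traversals_ge_2:
  assumes "E a1 b1" "a1 \<in> T" "b1 \<notin> T" "a2 \<in> T" "b2 \<notin> T" "a3 \<in> T" "b3 \<notin> T"
    and "distinct [(a1, b1), (a2, b2), (a3, b3)]"
    and "\<And>a b. E a b \<Longrightarrow> a \<in> T \<Longrightarrow> b \<notin> T \<Longrightarrow> (a, b) = (a1, b1) \<or> (a, b) = (a2, b2) \<or> (a, b) = (a3, b3)"
  shows "2 \<le> traversals w a1 b1 + traversals w a2 b2 + traversals w a3 b3"
  using cut_traversals_ge_2[of "{(a1, b1), (a2, b2), (a3, b3)}" T a1 b1] assms by (auto simp: add.assoc)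

lemma double_visits_eq:
  assumes "\<And>y. E x y \<longleftrightarrow> y = y1 \<or> y = y2 \<or> y = y3" "distinct [y1, y2, y3]"
  shows "2 * visits w {x} = traversals w x y1 + traversals w x y2 + traversals w x y3"
proof -
  have "\<not> E x x" using graph unfolding simple_graph_def by blast
  then have "x \<noteq> y1" "x \<noteq> y2" "x \<noteq> y3" using assms(1) by auto
  have "\<forall>i < length w - 1. w ! i \<noteq> w ! Suc i"
    using steps graph unfolding simple_graph_def by metis
  then have "2 * visits w {x} = crossings w {x}"
    by (simp add: crossings_singleton[OF nonempty closed])
  also have "\<dots> = (\<Sum>(a, b) \<in> {(x, y1), (x, y2), (x, y3)}. traversals w a b)"
    by (rule crossings_eq_sum_traversals[OF steps symp_edge])
      (use assms(1) \<open>x \<noteq> y1\<close> \<open>x \<noteq> y2\<close> \<open>x \<noteq> y3\<close> in auto)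
  also have "\<dots> = traversals w x y1 + traversals w x y2 + traversals w x y3"
    using assms(2) by (simp add: add.assoc)
  finally show ?thesis .
qed

lemma embedded_gadget_subset:
  assumes "embedded_gadget E k c u v"
  shows "{c..<c + gadget_size k} \<subseteq> V"
proof
  fix x assume "x \<in> {c..<c + gadget_size k}"
  then have "card {y. E x y} = 3" by (rule embedded_gadget_degree[OF assms])
  then obtain y where "E x y" by (metis Collect_empty_eq card.empty zero_neq_numeral)
  then show "x \<in> V" using edge_vertices by blast
qed

lemma terminal_traversals_ge_2:
  assumes gadget: "embedded_gadget E k c u v"
  shows "2 \<le> traversals w c u + traversals w (c + 1) v"
proof (rule cut2_traversals_ge_2[where T = "{c..<c + gadget_size k}",
      OF _ _ _ _ _ _ embedded_gadget_boundary[OF gadget]])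
  show "E c u"
    using gadget gadget_size_ge_6[of k] unfolding embedded_gadget_def by simp
qed (use gadget gadget_size_ge_6[of k] in \<open>auto simp: embedded_gadget_def\<close>)

lemma gadget_0_terminal_visits:
  assumes gadget: "embedded_gadget E 0 c u v"
  shows "traversals w (c + 1) v = 0 \<Longrightarrow> 2 \<le> visits w {c}"
    and "traversals w c u = 0 \<Longrightarrow> 2 \<le> visits w {c + 1}"
proof -
  let ?S = "{c..<c + gadget_size 0}"
  note nbrs = embedded_gadget_0[OF gadget]
  note boundary = embedded_gadget_boundary[OF gadget]
  note terminal = terminal_traversals_ge_2[OF gadget]
  have uv: "u \<notin> ?S" "v \<notin> ?S" using gadget by (simp_all add: embedded_gadget_def)
  then have "distinct [u, c + 3, c + 5]" "distinct [v, c + 2, c + 4]" by auto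
  note degrees = double_visits_eq[OF nbrs(1) this(1)] double_visits_eq[OF nbrs(2) this(2)]
  show "2 \<le> visits w {c}" if "traversals w (c + 1) v = 0"
  proof -
    have "2 \<le> traversals w (c + 3) c + traversals w (c + 5) c + traversals w (c + 1) v"
    proof (rule cut3_traversals_ge_2)
      fix a b assume "E a b" "a \<in> ?S - {c}" "b \<notin> ?S - {c}"
      then show "(a, b) = (c + 3, c) \<or> (a, b) = (c + 5, c) \<or> (a, b) = (c + 1, v)"
        using boundary[of a b] nbrs(1)[of a] edge_sym[of a b] uv by auto
    qed (use uv nbrs(1) edge_sym in auto)
    then show ?thesis
      using degrees(1) terminal that by (simp add: traversals_commute)
  qed
  show "2 \<le> visits w {c + 1}" if "traversals w c u = 0"
  proof -
    have "2 \<le> traversals w (c + 2) (c + 1) + traversals w (c + 4) (c + 1) + traversals w c u"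
    proof (rule cut3_traversals_ge_2)
      fix a b assume "E a b" "a \<in> ?S - {c + 1}" "b \<notin> ?S - {c + 1}"
      then show "(a, b) = (c + 2, c + 1) \<or> (a, b) = (c + 4, c + 1) \<or> (a, b) = (c, u)"
        using boundary[of a b] nbrs(2)[of a] edge_sym[of a b] uv by auto
    qed (use uv nbrs(2) edge_sym in auto)
    then show ?thesis
      using degrees(2) terminal that by (simp add: traversals_commute)
  qed
qed

lemma gadget_visits_0:
  assumes gadget: "embedded_gadget E 0 c u v"
  shows "gadget_visit_bound 0 + of_bool (traversals w c u = 0 \<or> traversals w (c + 1) v = 0)
    \<le> visits w {c..<c + gadget_size 0}"
proof -
  let ?S = "{c..<c + gadget_size 0}"
  have SV: "?S \<subseteq> V" by (rule embedded_gadget_subset[OF gadget])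
  show ?thesis
  proof (cases "traversals w c u = 0 \<or> traversals w (c + 1) v = 0")
    case True
    then obtain x where x: "x \<in> {c, c + 1}" "2 \<le> visits w {x}"
      using gadget_0_terminal_visits[OF gadget] by blast
    then have "x \<in> ?S" by auto
    then have "visits w ?S = visits w {x} + visits w (?S - {x})"
      using visits_Un[of "{x}" "?S - {x}" w] by (simp add: insert_absorb)
    moreover have "card (?S - {x}) \<le> visits w (?S - {x})"
      using SV by (intro card_le_visits) auto
    moreover have "card (?S - {x}) = 5"
      using \<open>x \<in> ?S\<close> by simp
    ultimately show ?thesis
      using True x(2) by simp
  next
    case False
    then show ?thesis
      using card_le_visits[OF SV] by simp
  qed
qed

context
  fixes k c u v
  assumes gadget: "embedded_gadget E (Suc k) c u v"
begin

private abbreviation (input) "n \<equiv> gadget_size k"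

lemma hub_degrees:
  shows "2 * visits w {c} = traversals w c u + traversals w c (c + 1) + traversals w c (c + 3)"
    and "2 * visits w {c + 1} = traversals w (c + 1) v + traversals w c (c + 1) + traversals w (c + 1) (c + 2)"
    and "2 * visits w {c + 2} = traversals w (c + 1) (c + 2) + traversals w (c + 5) (c + 2)
      + traversals w (c + 5 + n) (c + 2)"
    and "2 * visits w {c + 3} = traversals w c (c + 3) + traversals w (c + 4) (c + 3)
      + traversals w (c + 4 + n) (c + 3)"
proof -
  note nbrs = embedded_gadget_Suc_hubs[OF gadget]
  have "u \<notin> {c..<c + gadget_size (Suc k)}" "v \<notin> {c..<c + gadget_size (Suc k)}" "6 \<le> n"
    using gadget gadget_size_ge_6[of k] by (simp_all add: embedded_gadget_def)
  then have "distinct [u, c + 1, c + 3]" "distinct [v, c, c + 2]"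
    "distinct [c + 1, c + 5, c + 5 + n]" "distinct [c, c + 4, c + 4 + n]"
    by auto
  then show "2 * visits w {c} = traversals w c u + traversals w c (c + 1) + traversals w c (c + 3)"
    and "2 * visits w {c + 1} = traversals w (c + 1) v + traversals w c (c + 1) + traversals w (c + 1) (c + 2)"
    and "2 * visits w {c + 2} = traversals w (c + 1) (c + 2) + traversals w (c + 5) (c + 2)
      + traversals w (c + 5 + n) (c + 2)"
    and "2 * visits w {c + 3} = traversals w c (c + 3) + traversals w (c + 4) (c + 3)
      + traversals w (c + 4 + n) (c + 3)"
    using double_visits_eq[OF nbrs(1)] double_visits_eq[OF nbrs(2)]
      double_visits_eq[OF nbrs(3)] double_visits_eq[OF nbrs(4)]
    by (simp_all add: traversals_commute)
qed

lemma hub_cuts: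
  shows "2 \<le> traversals w (c + 1) (c + 2) + traversals w c (c + 3)"
    and "2 \<le> traversals w c u + traversals w c (c + 1) + traversals w (c + 1) (c + 2)"
    and "2 \<le> traversals w (c + 1) v + traversals w c (c + 1) + traversals w c (c + 3)"
proof -
  let ?S = "{c..<c + gadget_size (Suc k)}"
  note nbrs = embedded_gadget_Suc_hubs[OF gadget]
  note boundary = embedded_gadget_boundary[OF gadget]
  have uv: "u \<notin> ?S" "v \<notin> ?S"
    using gadget by (simp_all add: embedded_gadget_def)
  have "E (c + 2) (c + 1)" "E c u" "E (c + 1) v"
    using nbrs by blast+
  have "2 \<le> traversals w (c + 2) (c + 1) + traversals w (c + 3) c"
  proof (rule cut2_traversals_ge_2[where T = "?S - {c, c + 1}"])
    fix a b assume "E a b" "a \<in> ?S - {c, c + 1}" "b \<notin> ?S - {c, c + 1}"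
    then show "(a, b) = (c + 2, c + 1) \<or> (a, b) = (c + 3, c)"
      using boundary[of a b] nbrs(1)[of a] nbrs(2)[of a] edge_sym[of a b] uv by auto
  qed (use \<open>E (c + 2) (c + 1)\<close> in auto)
  then show "2 \<le> traversals w (c + 1) (c + 2) + traversals w c (c + 3)"
    by (simp add: traversals_commute)
  have "2 \<le> traversals w c u + traversals w c (c + 1) + traversals w (c + 2) (c + 1)"
  proof (rule cut3_traversals_ge_2[where T = "?S - {c + 1}"])
    fix a b assume "E a b" "a \<in> ?S - {c + 1}" "b \<notin> ?S - {c + 1}"
    then show "(a, b) = (c, u) \<or> (a, b) = (c, c + 1) \<or> (a, b) = (c + 2, c + 1)"
      using boundary[of a b] nbrs(2)[of a] edge_sym[of a b] uv by auto
  qed (use \<open>E c u\<close> uv in auto)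
  then show "2 \<le> traversals w c u + traversals w c (c + 1) + traversals w (c + 1) (c + 2)"
    by (simp add: traversals_commute)
  have "2 \<le> traversals w (c + 1) v + traversals w (c + 1) c + traversals w (c + 3) c"
  proof (rule cut3_traversals_ge_2[where T = "?S - {c}"])
    fix a b assume "E a b" "a \<in> ?S - {c}" "b \<notin> ?S - {c}"
    then show "(a, b) = (c + 1, v) \<or> (a, b) = (c + 1, c) \<or> (a, b) = (c + 3, c)"
      using boundary[of a b] nbrs(1)[of a] edge_sym[of a b] uv by auto
  qed (use \<open>E (c + 1) v\<close> uv in auto)
  then show "2 \<le> traversals w (c + 1) v + traversals w c (c + 1) + traversals w c (c + 3)"
    by (simp add: traversals_commute)
qed

lemma hub_visits:
  "6 + of_bool (traversals w c u = 0 \<or> traversals w (c + 1) v = 0)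
    \<le> visits w {c} + visits w {c + 1} + visits w {c + 2} + visits w {c + 3}
      + of_bool (traversals w (c + 4) (c + 3) = 0 \<or> traversals w (c + 5) (c + 2) = 0)
      + of_bool (traversals w (c + 4 + n) (c + 3) = 0 \<or> traversals w (c + 5 + n) (c + 2) = 0)"
proof (rule hub_inequality[OF hub_degrees _ _ _ _ hub_cuts terminal_traversals_ge_2[OF gadget]])
  have "{c, c + 1} \<subseteq> V"
    using embedded_gadget_subset[OF gadget] by auto
  then show "0 < visits w {c}" "0 < visits w {c + 1}"
    using visits_vertex_pos by auto
  show "2 \<le> traversals w (c + 4) (c + 3) + traversals w (c + 5) (c + 2)"
    "2 \<le> traversals w (c + 4 + n) (c + 3) + traversals w (c + 5 + n) (c + 2)"
    using terminal_traversals_ge_2[OF embedded_gadget_Suc_copies(1)[OF gadget]]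
      terminal_traversals_ge_2[OF embedded_gadget_Suc_copies(2)[OF gadget]]
    by (simp_all add: ac_simps)
qed

lemma gadget_visits_Suc:
  assumes IH: "\<And>c u v. embedded_gadget E k c u v \<Longrightarrow>
      gadget_visit_bound k + of_bool (traversals w c u = 0 \<or> traversals w (c + 1) v = 0)
      \<le> visits w {c..<c + gadget_size k}"
  shows "gadget_visit_bound (Suc k) + of_bool (traversals w c u = 0 \<or> traversals w (c + 1) v = 0)
    \<le> visits w {c..<c + gadget_size (Suc k)}"
proof -
  note copies = embedded_gadget_Suc_copies[OF gadget]
  have "visits w {c..<c + gadget_size (Suc k)} =
      visits w {c} + visits w {c + 1} + visits w {c + 2} + visits w {c + 3}
      + visits w {c + 4..<c + 4 + n} + visits w {c + 4 + n..<c + 4 + n + n}"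
  proof -
    have blocks: "{c..<c + gadget_size (Suc k)} =
        {c} \<union> ({c + 1} \<union> ({c + 2} \<union> ({c + 3} \<union> ({c + 4..<c + 4 + n} \<union> {c + 4 + n..<c + 4 + n + n}))))"
      by auto
    show ?thesis
      unfolding blocks by (subst visits_Un, force)+ (simp add: add.assoc)
  qed
  moreover have "gadget_visit_bound k + of_bool (traversals w (c + 4) (c + 3) = 0 \<or> traversals w (c + 5) (c + 2) = 0)
      \<le> visits w {c + 4..<c + 4 + n}"
    using IH[OF copies(1)] by (simp add: ac_simps)
  moreover have "gadget_visit_bound k
      + of_bool (traversals w (c + 4 + n) (c + 3) = 0 \<or> traversals w (c + 5 + n) (c + 2) = 0)
      \<le> visits w {c + 4 + n..<c + 4 + n + n}"
    using IH[OF copies(2)] by (simp add: ac_simps)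
  ultimately show ?thesis
    using hub_visits by simp
qed

end

lemma gadget_visits:
  "embedded_gadget E k c u v \<Longrightarrow>
   gadget_visit_bound k + of_bool (traversals w c u = 0 \<or> traversals w (c + 1) v = 0)
   \<le> visits w {c..<c + gadget_size k}"
proof (induction k arbitrary: c u v)
  case 0
  then show ?case by (rule gadget_visits_0)
next
  case (Suc k)
  show ?case by (rule gadget_visits_Suc[OF Suc.prems Suc.IH])
qed

end

section \<open>The hard graphs\<close>

lemma rtranclp_imp_walk:
  assumes "r\<^sup>*\<^sup>* x y" "x \<in> V" "\<And>a b. r a b \<Longrightarrow> b \<in> V"
  shows "\<exists>w. is_walk V r w \<and> hd w = x \<and> last w = y"
  using assms(1)
proof (induction rule: rtranclp_induct)
  case base
  have "is_walk V r [x]" using assms(2) by (simp add: is_walk_def)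
  then show ?case by force
next
  case (step y z)
  then obtain w where w: "is_walk V r w" "hd w = x" "last w = y" by blast
  then have "w \<noteq> []" by (simp add: is_walk_def)
  have "is_walk V r (w @ [z])"
    unfolding is_walk_def
  proof (intro conjI allI impI)
    show "set (w @ [z]) \<subseteq> V" using w(1) assms(3)[OF step(2)] by (simp add: is_walk_def)
    fix i assume "Suc i < length (w @ [z])"
    then consider "Suc i < length w" | "Suc i = length w" by fastforce
    then show "r ((w @ [z]) ! i) ((w @ [z]) ! Suc i)"
    proof cases
      case 1
      then show ?thesis using w(1) by (simp add: is_walk_def nth_append)
    next
      case 2
      then have "i = length w - 1" by simp
      then have "(w @ [z]) ! i = last w"
        using \<open>w \<noteq> []\<close> by (simp add: nth_append last_conv_nth)
      then show ?thesis using 2 w(3) step(2) by (simp add: nth_append)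
    qed
  qed simp
  then show ?case using w(2) \<open>w \<noteq> []\<close> by force
qed

definition hard_vertices :: "nat \<Rightarrow> nat set" where
  "hard_vertices k = {..<2 * gadget_size k}"

definition hard_edge :: "nat \<Rightarrow> nat \<Rightarrow> nat \<Rightarrow> bool" where
  "hard_edge k x y \<longleftrightarrow> gadget_edge k 0 x y \<or> gadget_edge k (gadget_size k) x y \<or>
     {x, y} = {0, gadget_size k + 1} \<or> {x, y} = {1, gadget_size k}"

lemma hard_graph_gadgets:
  shows "embedded_gadget (hard_edge k) k 0 (gadget_size k + 1) (gadget_size k)"
    and "embedded_gadget (hard_edge k) k (gadget_size k) 1 0"
  using gadget_size_ge_6[of k] unfolding embedded_gadget_def hard_edge_def
  by (auto simp: doubleton_eq_iff dest: gadget_edge_range)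

lemma hard_vertices_blocks:
  "hard_vertices k = {0..<0 + gadget_size k} \<union> {gadget_size k..<gadget_size k + gadget_size k}"
  by (auto simp: hard_vertices_def)

lemma hard_edge_vertices: "hard_edge k x y \<Longrightarrow> x \<in> hard_vertices k \<and> y \<in> hard_vertices k"
  using gadget_edge_range[of k 0 x y] gadget_edge_range[of k "gadget_size k" x y] gadget_size_ge_6[of k]
  unfolding hard_edge_def hard_vertices_def by (auto simp: doubleton_eq_iff)

lemma hard_edge_odd: "hard_edge k x y \<Longrightarrow> odd (x + y)"
  using gadget_edge_odd even_gadget_size[of k] unfolding hard_edge_def by (auto simp: doubleton_eq_iff)

lemma hard_edge_commute: "hard_edge k x y \<longleftrightarrow> hard_edge k y x"
  unfolding hard_edge_def by (auto simp: gadget_edge_commute doubleton_eq_iff)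

lemma simple_graph_hard: "simple_graph (hard_vertices k) (hard_edge k)"
proof -
  have "\<not> hard_edge k x x" for x
    using hard_edge_odd[of k x x] by auto
  then show ?thesis
    unfolding simple_graph_def using hard_edge_vertices hard_edge_commute
    by (auto simp: hard_vertices_def)
qed

lemma bipartite_hard: "bipartite (hard_vertices k) (hard_edge k)"
  unfolding bipartite_def
proof (intro exI conjI allI impI)
  show "{x \<in> hard_vertices k. even x} \<union> {x \<in> hard_vertices k. odd x} = hard_vertices k" by auto
  show "{x \<in> hard_vertices k. even x} \<inter> {x \<in> hard_vertices k. odd x} = {}" by auto
  fix x y assume "hard_edge k x y"
  then show "x \<in> {x \<in> hard_vertices k. even x} \<and> y \<in> {x \<in> hard_vertices k. odd x} \<or>
      x \<in> {x \<in> hard_vertices k. odd x} \<and> y \<in> {x \<in> hard_vertices k. even x}"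
    using hard_edge_odd[of k x y] hard_edge_vertices[of k x y] by auto
qed

lemma cubic_hard: "cubic (hard_vertices k) (hard_edge k)"
  unfolding cubic_def hard_vertices_blocks
  using embedded_gadget_degree[OF hard_graph_gadgets(1)] embedded_gadget_degree[OF hard_graph_gadgets(2)]
  by blast

lemma connected_hard: "connected_graph (hard_vertices k) (hard_edge k)"
proof -
  let ?n = "gadget_size k"
  have from_0: "(hard_edge k)\<^sup>*\<^sup>* 0 x" if "x \<in> hard_vertices k" for x
  proof -
    have "(hard_edge k)\<^sup>*\<^sup>* 0 1"
      by (rule embedded_gadget_reachable[OF hard_graph_gadgets(1)]) (use gadget_size_ge_6[of k] in simp)
    moreover have "hard_edge k 1 ?n" by (simp add: hard_edge_def)
    ultimately have "(hard_edge k)\<^sup>*\<^sup>* 0 ?n" by (rule rtranclp.rtrancl_into_rtrancl)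
    moreover from that consider "x \<in> {0..<0 + ?n}" | "x \<in> {?n..<?n + ?n}"
      unfolding hard_vertices_blocks by blast
    ultimately show ?thesis
      using embedded_gadget_reachable[OF hard_graph_gadgets(1)]
        embedded_gadget_reachable[OF hard_graph_gadgets(2)] rtranclp_trans
      by metis
  qed
  have sym: "symp (hard_edge k)\<^sup>*\<^sup>*"
    by (rule symp_rtranclp) (use hard_edge_commute in \<open>blast intro: sympI\<close>)
  show ?thesis
    unfolding connected_graph_def
  proof (intro conjI ballI)
    have "0 \<in> hard_vertices k"
      using gadget_size_ge_6[of k] by (simp add: hard_vertices_def)
    then show "hard_vertices k \<noteq> {}" by blast
    fix x y assume "x \<in> hard_vertices k" "y \<in> hard_vertices k"
    then have "(hard_edge k)\<^sup>*\<^sup>* x y"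
      using rtranclp_trans[OF sympD[OF sym from_0] from_0] by blast
    then show "\<exists>w. is_walk (hard_vertices k) (hard_edge k) w \<and> hd w = x \<and> last w = y"
      by (rule rtranclp_imp_walk[OF _ \<open>x \<in> hard_vertices k\<close>]) (simp add: hard_edge_vertices)
  qed
qed

lemma tour_length_hard:
  assumes "tsp_tour (hard_vertices k) (hard_edge k) w"
  shows "2 * gadget_visit_bound k \<le> walk_length w"
proof -
  have "2 \<le> card (hard_vertices k)" using gadget_size_ge_6[of k] by (simp add: hard_vertices_def)
  then interpret graph_tour "hard_vertices k" "hard_edge k" w
    using simple_graph_hard assms by unfold_locales
  have "2 * gadget_visit_bound k \<le> visits w (hard_vertices k)"
    using gadget_visits[OF hard_graph_gadgets(1)] gadget_visits[OF hard_graph_gadgets(2)]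
      visits_Un[of "{0..<0 + gadget_size k}" "{gadget_size k..<gadget_size k + gadget_size k}" w]
    unfolding hard_vertices_blocks by auto
  also have "\<dots> = walk_length w"
    using visits_of_superset[of w "hard_vertices k"] set_tour by (simp add: walk_length_def)
  finally show ?thesis .
qed

theorem theorem2:
  fixes \<epsilon> :: real
  assumes "\<epsilon> > 0"
  shows "\<exists>(V::nat set) E. simple_graph V E \<and> connected_graph V E \<and> bipartite V E \<and> cubic V E \<and>
           (\<forall>w. tsp_tour V E w \<longrightarrow> real (walk_length w) \<ge> (1.2 - \<epsilon>) * real (card V))"
proof -
  obtain k :: nat where "2 / \<epsilon> < k" using reals_Archimedean2 by blast
  then have "2 < \<epsilon> * k" using assms by (simp add: field_simps)
  also have "\<dots> \<le> \<epsilon> * gadget_size k" using assms gadget_size_ge[of k] by simp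
  finally have "2 < \<epsilon> * gadget_size k" .
  moreover have "real (5 * gadget_visit_bound k + 6) = real (6 * gadget_size k)"
    using gadget_visit_bound_eq[of k] by (simp only:)
  ultimately have bound: "(1.2 - \<epsilon>) * real (card (hard_vertices k)) \<le> real (2 * gadget_visit_bound k)"
    by (simp add: hard_vertices_def algebra_simps)
  show ?thesis
  proof (intro exI conjI allI impI)
    fix w assume "tsp_tour (hard_vertices k) (hard_edge k) w"
    then show "(1.2 - \<epsilon>) * real (card (hard_vertices k)) \<le> real (walk_length w)"
      using bound tour_length_hard of_nat_mono by fastforce
  qed (fact simple_graph_hard connected_hard bipartite_hard cubic_hard)+
qed

end
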